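(* For every integer $k\ge1$: (a) every graph $G$ with $\mathrm{adim}(G)=k$ has clique number at most $2^k$; (b) every graph $G$ with $\mathrm{bdim}(G)=k$ has clique number at most $2^k$; (c) there exists a graph $G$ with $\mathrm{adim}(G)=\mathrm{bdim}(G)=k$ whose clique number is exactly $2^k$.
   Context: $d(x,y)$ is the length of a shortest $x$–$y$ path, with $d(x,y)=\infty$ if $x,y$ lie in different components. For an integer $k\ge1$ let $d_k(x,y)=\min\{d(x,y),k+1\}$. A set $A\subseteq V(G)$ is an adjacency resolving set if for all distinct $x,y\in V(G)$ there is $z\in A$ with $d_1(x,z)\ne d_1(y,z)$. The adjacency dimension $\mathrm{adim}(G)$ is the minimum size of an adjacency resolving set. A function $f:V(G)\to\mathbb{Z}_{\ge 0}$ is a resolving broadcast of $G$ if for all distinct $x,y\in V(G)$ there is $z\in V(G)$ with $f(z)=i>0$ and $d_i(x,z)\ne d_i(y,z)$. The broadcast dimension $\mathrm{bdim}(G)$ is the minimum of $\sum_{v\in V(G)}f(v)$ over all resolving broadcasts $f$ of $G$. *)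

theory Defs
  imports Main "HOL-Library.Extended_Nat"
begin

definition graph :: "'a set \<Rightarrow> ('a \<Rightarrow> 'a \<Rightarrow> bool) \<Rightarrow> bool" where
  "graph V E \<longleftrightarrow> finite V \<and> (\<forall>x y. E x y \<longrightarrow> x \<in> V \<and> y \<in> V)
     \<and> (\<forall>x y. E x y \<longrightarrow> E y x) \<and> (\<forall>x. \<not> E x x)"

fun walk :: "('a \<Rightarrow> 'a \<Rightarrow> bool) \<Rightarrow> 'a \<Rightarrow> 'a \<Rightarrow> nat \<Rightarrow> bool" where
  "walk E x y 0 = (x = y)"
| "walk E x y (Suc n) = (\<exists>z. E x z \<and> walk E z y n)"

definition dist :: "('a \<Rightarrow> 'a \<Rightarrow> bool) \<Rightarrow> 'a \<Rightarrow> 'a \<Rightarrow> enat" where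
  "dist E x y = (if \<exists>n. walk E x y n then enat (LEAST n. walk E x y n) else \<infinity>)"

definition dist_trunc :: "('a \<Rightarrow> 'a \<Rightarrow> bool) \<Rightarrow> nat \<Rightarrow> 'a \<Rightarrow> 'a \<Rightarrow> enat" where
  "dist_trunc E k x y = min (dist E x y) (enat (k + 1))"

definition adj_resolving :: "'a set \<Rightarrow> ('a \<Rightarrow> 'a \<Rightarrow> bool) \<Rightarrow> 'a set \<Rightarrow> bool" where
  "adj_resolving V E A \<longleftrightarrow> A \<subseteq> V \<and>
     (\<forall>x\<in>V. \<forall>y\<in>V. x \<noteq> y \<longrightarrow> (\<exists>z\<in>A. dist_trunc E 1 x z \<noteq> dist_trunc E 1 y z))"

definition adim :: "'a set \<Rightarrow> ('a \<Rightarrow> 'a \<Rightarrow> bool) \<Rightarrow> nat" where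
  "adim V E = (LEAST n. \<exists>A. adj_resolving V E A \<and> card A = n)"

definition resolving_broadcast :: "'a set \<Rightarrow> ('a \<Rightarrow> 'a \<Rightarrow> bool) \<Rightarrow> ('a \<Rightarrow> nat) \<Rightarrow> bool" where
  "resolving_broadcast V E f \<longleftrightarrow> (\<forall>v. v \<notin> V \<longrightarrow> f v = 0) \<and>
     (\<forall>x\<in>V. \<forall>y\<in>V. x \<noteq> y \<longrightarrow>
        (\<exists>z\<in>V. f z > 0 \<and> dist_trunc E (f z) x z \<noteq> dist_trunc E (f z) y z))"

definition bdim :: "'a set \<Rightarrow> ('a \<Rightarrow> 'a \<Rightarrow> bool) \<Rightarrow> nat" where
  "bdim V E = (LEAST n. \<exists>f. resolving_broadcast V E f \<and> (\<Sum>v\<in>V. f v) = n)"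

definition is_clique :: "'a set \<Rightarrow> ('a \<Rightarrow> 'a \<Rightarrow> bool) \<Rightarrow> 'a set \<Rightarrow> bool" where
  "is_clique V E C \<longleftrightarrow> C \<subseteq> V \<and> (\<forall>x\<in>C. \<forall>y\<in>C. x \<noteq> y \<longrightarrow> E x y)"

definition clique_number :: "'a set \<Rightarrow> ('a \<Rightarrow> 'a \<Rightarrow> bool) \<Rightarrow> nat" where
  "clique_number V E = Max {card C | C. is_clique V E C}"

end

theory Submission
  imports Defs "HOL-Library.FuncSet"
begin

text \<open>Inside a clique any landmark z sees the clique vertices at (truncated) distances d or d + 1
  for a single d, since adjacent vertices have distances to z differing by at most one. Hence a
  resolving set of k vertices, or the support of a resolving broadcast of cost k, codes the clique
  injectively into a product of k two-element sets, so the clique has at most 2^k vertices.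
  The bound is attained by k landmarks 0, ..., k-1 together with a clique on 2^k further vertices,
  where the clique vertex k + m is joined to landmark j iff bit j of m is set.\<close>

lemma dist_le_if_walk: "walk E x y n \<Longrightarrow> dist E x y \<le> enat n"
  unfolding dist_def by (auto intro: Least_le)

lemma walk_if_dist_eq_enat: "dist E x y = enat n \<Longrightarrow> walk E x y n"
  unfolding dist_def by (auto split: if_splits intro: LeastI_ex)

lemma le_dist_if_walks_ge: "(\<And>n. walk E x y n \<Longrightarrow> m \<le> n) \<Longrightarrow> enat m \<le> dist E x y"
  unfolding dist_def by (auto intro: LeastI2_ex)

lemma dist_trunc_1_eq:
  "dist_trunc E 1 x y = (if x = y then 0 else if E x y then 1 else 2)"
proof -
  have "dist E x x = 0"
    using dist_le_if_walk[of E x x 0] by (simp flip: zero_enat_def)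
  moreover have "dist E x y = 1" if "x \<noteq> y" "E x y"
  proof (rule antisym)
    show "dist E x y \<le> 1" using dist_le_if_walk[of E x y 1] that by (simp add: one_enat_def)
    have "1 \<le> n" if "walk E x y n" for n using \<open>x \<noteq> y\<close> that by (cases n) auto
    thus "1 \<le> dist E x y" using le_dist_if_walks_ge[of E x y 1] by (simp add: one_enat_def)
  qed
  moreover have "2 \<le> dist E x y" if "x \<noteq> y" "\<not> E x y"
  proof -
    have "2 \<le> n" if "walk E x y n" for n
      using \<open>x \<noteq> y\<close> \<open>\<not> E x y\<close> that by (cases n; cases "n - 1") auto
    thus ?thesis using le_dist_if_walks_ge[of E x y 2] by (simp add: numeral_eq_enat)
  qed
  ultimately show ?thesis
    unfolding dist_trunc_def by (auto simp: min_absorb2 numeral_eq_enat one_enat_def simp del: One_nat_def)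
qed

lemma dist_trunc_1_self_ne: "x \<noteq> y \<Longrightarrow> dist_trunc E 1 x x \<noteq> dist_trunc E 1 y x"
  using dist_trunc_1_eq[of E x x] dist_trunc_1_eq[of E y x] by auto

lemma dist_le_dist_plus_1:
  assumes "E x y \<or> x = y"
  shows "dist E x z \<le> dist E y z + 1"
proof (cases "dist E y z")
  case (enat n)
  have "walk E x z (if x = y then n else Suc n)"
    using walk_if_dist_eq_enat[OF enat] assms by auto
  from dist_le_if_walk[OF this] show ?thesis
    using enat by (auto simp: one_enat_def intro: order_trans)
qed simp

lemma dist_trunc_le_dist_trunc_plus_1:
  assumes "E x y \<or> x = y"
  shows "dist_trunc E r x z \<le> dist_trunc E r y z + 1"
  using dist_le_dist_plus_1[of E x y z, OF assms] unfolding dist_trunc_def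
  by (cases "dist E x z"; cases "dist E y z"; auto simp: min_def one_enat_def)

lemma card_le_2_if_pairwise_le_plus_1:
  fixes T :: "enat set"
  assumes "finite T" and "\<forall>a\<in>T. \<forall>b\<in>T. a \<le> b + 1"
  shows "card T \<le> 2"
proof (cases "T = {}")
  case False
  define m where "m = Min T"
  have "m \<in> T" using assms False unfolding m_def by simp
  have "T \<subseteq> {m, m + 1}"
  proof
    fix v assume "v \<in> T"
    with assms \<open>m \<in> T\<close> have "m \<le> v" "v \<le> m + 1" unfolding m_def by auto
    thus "v \<in> {m, m + 1}" by (cases m; cases v; auto simp: one_enat_def)
  qed
  hence "card T \<le> card {m, m + 1}" by (simp add: card_mono)
  also have "\<dots> \<le> 2" by (simp add: card_insert_le_m1)
  finally show ?thesis .
qed simp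

text \<open>The landmarks z of A may use individual truncation radii r z; this covers both
  adjacency resolving sets (all radii 1) and resolving broadcasts (radius f z on the support).\<close>
lemma card_clique_le_2_power_card_landmarks:
  assumes "graph V E" and "finite A"
    and resolves: "\<forall>x\<in>V. \<forall>y\<in>V. x \<noteq> y \<longrightarrow>
                     (\<exists>z\<in>A. dist_trunc E (r z) x z \<noteq> dist_trunc E (r z) y z)"
    and clique: "is_clique V E C"
  shows "card C \<le> 2 ^ card A"
proof -
  have "C \<subseteq> V" using clique unfolding is_clique_def by simp
  moreover have "finite V" using \<open>graph V E\<close> unfolding graph_def by simp
  ultimately have "finite C" by (rule finite_subset)
  define T where "T z = (\<lambda>x. dist_trunc E (r z) x z) ` C" for z
  define code where "code x = restrict (\<lambda>z. dist_trunc E (r z) x z) A" for x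
  have "inj_on code C"
  proof (rule inj_onI, rule ccontr)
    fix x y assume "x \<in> C" "y \<in> C" "code x = code y" "x \<noteq> y"
    then obtain z where "z \<in> A" "dist_trunc E (r z) x z \<noteq> dist_trunc E (r z) y z"
      using resolves \<open>C \<subseteq> V\<close> by blast
    moreover have "code x z = code y z" using \<open>code x = code y\<close> by simp
    ultimately show False unfolding code_def by simp
  qed
  have "card (T z) \<le> 2" for z
  proof (rule card_le_2_if_pairwise_le_plus_1)
    show "finite (T z)" using \<open>finite C\<close> unfolding T_def by simp
    show "\<forall>a\<in>T z. \<forall>b\<in>T z. a \<le> b + 1"
    proof (clarsimp simp: T_def)
      fix x y assume "x \<in> C" "y \<in> C"
      hence "E x y \<or> x = y" using clique unfolding is_clique_def by blast
      thus "dist_trunc E (r z) x z \<le> dist_trunc E (r z) y z + 1"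
        by (rule dist_trunc_le_dist_trunc_plus_1)
    qed
  qed
  have "card C = card (code ` C)" using \<open>inj_on code C\<close> by (simp add: card_image)
  also have "\<dots> \<le> card (PiE A T)"
  proof (rule card_mono)
    show "finite (PiE A T)" using \<open>finite A\<close> \<open>finite C\<close> by (simp add: finite_PiE T_def)
    show "code ` C \<subseteq> PiE A T" unfolding code_def T_def by auto
  qed
  also have "\<dots> = (\<Prod>z\<in>A. card (T z))" by (simp add: card_PiE \<open>finite A\<close>)
  also have "\<dots> \<le> 2 ^ card A"
    by (rule prod_le_power) (use \<open>\<And>z. card (T z) \<le> 2\<close> in auto)
  finally show ?thesis .
qed

lemma finite_clique_sizes: "graph V E \<Longrightarrow> finite {card C | C. is_clique V E C}"
proof -
  assume "graph V E"
  hence "finite (card ` Pow V)" unfolding graph_def by simp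
  moreover have "{card C | C. is_clique V E C} \<subseteq> card ` Pow V" unfolding is_clique_def by auto
  ultimately show ?thesis by (rule finite_subset[rotated])
qed

lemma clique_number_le:
  assumes "graph V E" and "\<And>C. is_clique V E C \<Longrightarrow> card C \<le> b"
  shows "clique_number V E \<le> b"
proof -
  have "is_clique V E {}" unfolding is_clique_def by simp
  with finite_clique_sizes[OF assms(1)] assms(2) show ?thesis
    unfolding clique_number_def by (subst Max_le_iff) auto
qed

lemma card_le_clique_number:
  assumes "graph V E" and "is_clique V E C"
  shows "card C \<le> clique_number V E"
  using finite_clique_sizes[OF assms(1)] assms(2) unfolding clique_number_def by (intro Max_ge) auto

lemma adj_resolving_vertex_set: "adj_resolving V E V"
  unfolding adj_resolving_def using dist_trunc_1_self_ne by (metis subset_refl)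

lemma resolving_broadcast_indicator: "resolving_broadcast V E (\<lambda>v. if v \<in> V then 1 else 0)"
  unfolding resolving_broadcast_def
proof (intro conjI ballI allI impI)
  fix x y assume "x \<in> V" "x \<noteq> y"
  with dist_trunc_1_self_ne[OF \<open>x \<noteq> y\<close>, of E]
  show "\<exists>z\<in>V. 0 < (if z \<in> V then 1 else 0::nat) \<and>
    dist_trunc E (if z \<in> V then 1 else 0) x z \<noteq> dist_trunc E (if z \<in> V then 1 else 0) y z"
    by (intro bexI[of _ x]) simp_all
qed simp

lemma card_clique_le_2_power_adim:
  assumes "graph V E" and "is_clique V E C"
  shows "card C \<le> 2 ^ adim V E"
proof -
  have "\<exists>A. adj_resolving V E A \<and> card A = adim V E"
    unfolding adim_def by (rule LeastI_ex) (use adj_resolving_vertex_set in blast)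
  then obtain A where A: "adj_resolving V E A" "card A = adim V E" by blast
  have "finite A" using A \<open>graph V E\<close> unfolding adj_resolving_def graph_def by (meson finite_subset)
  from card_clique_le_2_power_card_landmarks[OF assms(1) this _ assms(2), of "\<lambda>_. 1"] A
  show ?thesis unfolding adj_resolving_def by simp
qed

lemma card_clique_le_2_power_cost:
  assumes "graph V E" and "is_clique V E C" and f: "resolving_broadcast V E f"
  shows "card C \<le> 2 ^ (\<Sum>v\<in>V. f v)"
proof -
  let ?S = "{z\<in>V. 0 < f z}"
  have "finite V" using \<open>graph V E\<close> unfolding graph_def by simp
  have "card ?S = (\<Sum>v\<in>?S. 1)" by simp
  also have "\<dots> \<le> (\<Sum>v\<in>?S. f v)" by (rule sum_mono) auto
  also have "\<dots> \<le> (\<Sum>v\<in>V. f v)" by (rule sum_mono2) (use \<open>finite V\<close> in auto)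
  finally have "card ?S \<le> (\<Sum>v\<in>V. f v)" .
  have "card C \<le> 2 ^ card ?S"
  proof (rule card_clique_le_2_power_card_landmarks[OF assms(1) _ _ assms(2), of _ f])
    show "finite ?S" using \<open>finite V\<close> by simp
    show "\<forall>x\<in>V. \<forall>y\<in>V. x \<noteq> y \<longrightarrow> (\<exists>z\<in>?S. dist_trunc E (f z) x z \<noteq> dist_trunc E (f z) y z)"
      using f unfolding resolving_broadcast_def by blast
  qed
  also have "\<dots> \<le> 2 ^ (\<Sum>v\<in>V. f v)"
    using \<open>card ?S \<le> (\<Sum>v\<in>V. f v)\<close> by (rule power_increasing) simp
  finally show ?thesis .
qed

lemma card_clique_le_2_power_bdim:
  assumes "graph V E" and "is_clique V E C"
  shows "card C \<le> 2 ^ bdim V E"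
proof -
  have "\<exists>f. resolving_broadcast V E f \<and> (\<Sum>v\<in>V. f v) = bdim V E"
    unfolding bdim_def by (rule LeastI_ex) (use resolving_broadcast_indicator in blast)
  then obtain f where "resolving_broadcast V E f" "(\<Sum>v\<in>V. f v) = bdim V E" by blast
  with card_clique_le_2_power_cost[OF assms] show ?thesis by metis
qed

lemma clique_number_le_2_power_adim: "graph V E \<Longrightarrow> clique_number V E \<le> 2 ^ adim V E"
  using clique_number_le card_clique_le_2_power_adim by blast

lemma clique_number_le_2_power_bdim: "graph V E \<Longrightarrow> clique_number V E \<le> 2 ^ bdim V E"
  using clique_number_le card_clique_le_2_power_bdim by blast

lemma ex_bit_neq_if_neq:
  fixes m m' :: nat
  assumes "m < 2 ^ k" "m' < 2 ^ k" "m \<noteq> m'"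
  shows "\<exists>j<k. bit m j \<noteq> bit m' j"
proof (rule ccontr)
  assume "\<not> ?thesis"
  hence "take_bit k m = take_bit k m'" by (auto simp: bit_eq_iff bit_take_bit_iff)
  thus False using assms by (metis take_bit_nat_eq_self_iff)
qed

definition bit_clique_graph :: "nat \<Rightarrow> nat \<Rightarrow> nat \<Rightarrow> bool" where
  "bit_clique_graph k x y \<longleftrightarrow> x < k + 2^k \<and> y < k + 2^k \<and> x \<noteq> y \<and>
     ((k \<le> x \<and> k \<le> y) \<or> (x < k \<and> k \<le> y \<and> bit (y - k) x) \<or> (y < k \<and> k \<le> x \<and> bit (x - k) y))"

lemma graph_bit_clique_graph: "graph {..<k + 2^k} (bit_clique_graph k)"
  unfolding graph_def bit_clique_graph_def by auto

lemma is_clique_bit_clique_graph: "is_clique {..<k + 2^k} (bit_clique_graph k) {k..<k + 2^k}"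
  unfolding is_clique_def bit_clique_graph_def by auto

lemma adj_resolving_bit_clique_graph: "adj_resolving {..<k + 2^k} (bit_clique_graph k) {..<k}"
  unfolding adj_resolving_def
proof (intro conjI ballI impI)
  fix x y assume x: "x \<in> {..<k + 2^k}" and y: "y \<in> {..<k + 2^k}" and "x \<noteq> y"
  show "\<exists>z\<in>{..<k}. dist_trunc (bit_clique_graph k) 1 x z \<noteq> dist_trunc (bit_clique_graph k) 1 y z"
  proof (cases "x < k \<or> y < k")
    case True
    thus ?thesis using dist_trunc_1_self_ne \<open>x \<noteq> y\<close> by (metis lessThan_iff)
  next
    case False
    with x y \<open>x \<noteq> y\<close> have "x - k < 2^k" "y - k < 2^k" "x - k \<noteq> y - k" by auto
    then obtain z where z: "z < k" "bit (x - k) z \<noteq> bit (y - k) z"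
      using ex_bit_neq_if_neq by blast
    with x y False have "bit_clique_graph k x z \<noteq> bit_clique_graph k y z"
      unfolding bit_clique_graph_def by auto
    with z False show ?thesis
      using dist_trunc_1_eq[of _ x z] dist_trunc_1_eq[of _ y z] by (intro bexI[of _ z]) auto
  qed
qed simp

lemma resolving_broadcast_bit_clique_graph:
  "resolving_broadcast {..<k + 2^k} (bit_clique_graph k) (\<lambda>v. if v < k then 1 else 0)"
  unfolding resolving_broadcast_def
proof (intro conjI ballI allI impI)
  fix x y assume "x \<in> {..<k + 2^k}" "y \<in> {..<k + 2^k}" "x \<noteq> y"
  then obtain z where "z < k" "dist_trunc (bit_clique_graph k) 1 x z \<noteq> dist_trunc (bit_clique_graph k) 1 y z"
    using adj_resolving_bit_clique_graph unfolding adj_resolving_def by blast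
  thus "\<exists>z\<in>{..<k + 2^k}. 0 < (if z < k then 1 else 0::nat) \<and>
    dist_trunc (bit_clique_graph k) (if z < k then 1 else 0) x z \<noteq>
    dist_trunc (bit_clique_graph k) (if z < k then 1 else 0) y z"
    by (intro bexI[of _ z]) auto
qed simp

lemma sum_landmark_indicator: "(\<Sum>v\<in>{..<k + 2^k}. (if v < k then 1 else 0::nat)) = k"
proof -
  have "{..<k + 2^k} \<inter> {v. v < k} = {..<k}" by auto
  thus ?thesis by (simp add: sum.If_cases)
qed

lemma bit_clique_graph_extremal:
  "adim {..<k + 2^k} (bit_clique_graph k) = k \<and> bdim {..<k + 2^k} (bit_clique_graph k) = k
     \<and> clique_number {..<k + 2^k} (bit_clique_graph k) = 2 ^ k"
proof -
  let ?V = "{..<k + 2^k}" and ?E = "bit_clique_graph k"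
  note g = graph_bit_clique_graph and cl = is_clique_bit_clique_graph
  have "adim ?V ?E \<le> k"
    unfolding adim_def by (rule Least_le)
      (use adj_resolving_bit_clique_graph in \<open>intro exI[of _ "{..<k}"], simp\<close>)
  moreover have "k \<le> adim ?V ?E"
    using card_clique_le_2_power_adim[OF g cl] by (simp add: power_le_imp_le_exp)
  moreover have "bdim ?V ?E \<le> k"
    unfolding bdim_def by (rule Least_le)
      (use resolving_broadcast_bit_clique_graph sum_landmark_indicator
        in \<open>intro exI[of _ "\<lambda>v. if v < k then 1 else 0"], simp\<close>)
  moreover have "k \<le> bdim ?V ?E"
    using card_clique_le_2_power_bdim[OF g cl] by (simp add: power_le_imp_le_exp)
  moreover have "clique_number ?V ?E \<le> 2 ^ adim ?V ?E"
    using g by (rule clique_number_le_2_power_adim)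
  moreover have "2^k \<le> clique_number ?V ?E" using card_le_clique_number[OF g cl] by simp
  ultimately show ?thesis by simp
qed

theorem corollary3p7:
  fixes k :: nat
  assumes "k \<ge> 1"
  shows "(\<forall>(V :: 'a set) E. graph V E \<and> adim V E = k \<longrightarrow> clique_number V E \<le> 2 ^ k)
       \<and> (\<forall>(V :: 'a set) E. graph V E \<and> bdim V E = k \<longrightarrow> clique_number V E \<le> 2 ^ k)
       \<and> (\<exists>(V :: nat set) E. graph V E \<and> adim V E = k \<and> bdim V E = k
              \<and> clique_number V E = 2 ^ k)"
  using clique_number_le_2_power_adim clique_number_le_2_power_bdim
    graph_bit_clique_graph bit_clique_graph_extremal by metis

end
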